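(* Let $d\geq 1$, $k\geq 1$, and let $\mu$ be a mass distribution on $\mathbb{R}^d$ with $\mu(\mathbb{R}^d)=1$. Then there exist $k$ points $p_1,\ldots,p_k$ in $\mathbb{R}^d$ whose generalized Tukey depth satisfies $\mathrm{gtd}_{\mu}(\{p_1,\ldots,p_k\})\geq\frac{1}{kd+1}$.
   Context: A mass distribution $\mu$ on $\mathbb{R}^d$ is a measure such that all open sets are measurable, $0<\mu(\mathbb{R}^d)<\infty$, and $\mu(S)=0$ for every lower-dimensional subset $S$. For a finite set $Q\subset\mathbb{R}^d$, letting $H$ denote the set of all closed halfspaces of $\mathbb{R}^d$, the generalized Tukey depth is $\mathrm{gtd}_{\mu}(Q)=\min_{h\in H,\ h\cap Q\neq\emptyset}\frac{\mu(h)}{|h\cap Q|}$. *)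

theory Defs
  imports "HOL-Analysis.Analysis"
begin

definition mass_distribution :: "'a::euclidean_space measure \<Rightarrow> bool" where
  "mass_distribution M \<longleftrightarrow>
     space M = UNIV \<and> sets borel \<subseteq> sets M \<and>
     0 < emeasure M UNIV \<and> emeasure M UNIV < \<infinity> \<and>
     (\<forall>S \<in> sets M. aff_dim S < int DIM('a) \<longrightarrow> emeasure M S = 0)"

definition closed_halfspaces :: "'a::euclidean_space set set" where
  "closed_halfspaces = {{x. a \<bullet> x \<le> b} | a b. a \<noteq> 0}"

text \<open>Generalized Tukey depth: min over closed halfspaces h meeting Q of mu(h)/|h \<inter> Q|
  (rendered as an infimum).\<close>
definition gtd :: "'a::euclidean_space measure \<Rightarrow> 'a set \<Rightarrow> real" where
  "gtd M Q = (INF h \<in> {h \<in> closed_halfspaces. h \<inter> Q \<noteq> {}}. measure M h / real (card (h \<inter> Q)))"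

end

theory Submission
  imports Defs
begin

text \<open>
  Put \<open>\<epsilon> = 1/(kd+1)\<close> and fix a lexicographic order on directions. For \<open>j < k\<close> consider
  the closed halfspaces \<open>{z. b \<le> a \<bullet> z}\<close> whose complement has mass less than
  \<open>(j+1)\<epsilon>\<close> if \<open>a\<close> is lexicographically positive and less than \<open>(k-j)\<epsilon>\<close> otherwise.
  Halfspaces whose normals are all lexicographically positive (or all negative) always meet,
  so if \<open>d+1\<close> of these halfspaces had empty intersection, both kinds of normals would occur
  and their complements would cover space with total mass below
  \<open>(j+1)\<epsilon> + (k-j)\<epsilon> + (d-1)k\<epsilon> = 1\<close>.
  By Helly's theorem and compactness some point \<open>p\<^sub>j\<close> lies in all of them. A halfspace
  containing \<open>p\<^sub>j\<^sub>1, \<dots>, p\<^sub>j\<^sub>m\<close> with \<open>j\<^sub>1 < \<dots> < j\<^sub>m\<close> then has mass at least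
  \<open>(j\<^sub>m+1)\<epsilon>\<close> or \<open>(k-j\<^sub>1)\<epsilon>\<close>, hence at least \<open>m\<epsilon>\<close>. Coinciding points are finally pulled
  apart by small moves: since hyperplanes are null, thin slabs have uniformly small mass,
  and moving a point within such a slab costs less than \<open>\<epsilon>\<close> in any halfspace.
\<close>

fun lex_pos :: "'a::real_inner list \<Rightarrow> 'a \<Rightarrow> bool" where
  "lex_pos [] a \<longleftrightarrow> False"
| "lex_pos (v # vs) a \<longleftrightarrow> 0 < a \<bullet> v \<or> (a \<bullet> v = 0 \<and> lex_pos vs a)"

lemma lex_pos_uminus_iff:
  "lex_pos vs (- a) \<longleftrightarrow> (\<exists>v\<in>set vs. a \<bullet> v \<noteq> 0) \<and> \<not> lex_pos vs a"
  by (induction vs) auto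

lemma lex_pos_halfspaces_inter:
  fixes A :: "('a::real_inner \<times> real) set"
  assumes "finite A" "\<forall>(a, b)\<in>A. lex_pos vs a"
  shows "\<exists>z. \<forall>(a, b)\<in>A. b \<le> a \<bullet> z"
  using assms
proof (induction vs arbitrary: A)
  case Nil
  then show ?case by auto
next
  case (Cons v vs)
  define A\<^sub>0 where "A\<^sub>0 = {p\<in>A. fst p \<bullet> v = 0}"
  have "finite A\<^sub>0" "\<forall>(a, b)\<in>A\<^sub>0. lex_pos vs a"
    using Cons.prems by (auto simp: A\<^sub>0_def)
  then obtain z where z: "\<forall>(a, b)\<in>A\<^sub>0. b \<le> a \<bullet> z"
    using Cons.IH by blast
  \<comment> \<open>The remaining constraints have \<open>a \<bullet> v > 0\<close>, so moving far enough along \<open>v\<close> meets them.\<close>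
  define t where "t = Max ((\<lambda>(a, b). (b - a \<bullet> z) / (a \<bullet> v)) ` A)"
  show ?case
  proof (intro exI ballI, clarify)
    fix a b assume ab: "(a, b) \<in> A"
    show "b \<le> a \<bullet> (z + t *\<^sub>R v)"
    proof (cases "(a, b) \<in> A\<^sub>0")
      case True
      then show ?thesis using z by (auto simp: A\<^sub>0_def inner_add_right)
    next
      case False
      then have "0 < a \<bullet> v" using ab Cons.prems(2) by (auto simp: A\<^sub>0_def)
      moreover have "(b - a \<bullet> z) / (a \<bullet> v) \<le> t"
        unfolding t_def using ab Cons.prems(1) by (intro Max_ge) (auto intro: rev_image_eqI)
      ultimately show ?thesis by (simp add: divide_le_eq inner_add_right algebra_simps)
    qed
  qed
qed

definition basis_list :: "'a::euclidean_space list" where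
  "basis_list = (SOME vs. set vs = Basis)"

lemma set_basis_list: "set (basis_list :: 'a::euclidean_space list) = Basis"
  unfolding basis_list_def by (rule someI_ex) (rule finite_list[OF finite_Basis])

lemma lex_pos_basis_list_uminus:
  fixes a :: "'a::euclidean_space"
  assumes "a \<noteq> 0"
  shows "lex_pos basis_list (- a) \<longleftrightarrow> \<not> lex_pos basis_list a"
  using assms euclidean_all_zero_iff[of a]
  by (auto simp: lex_pos_uminus_iff set_basis_list inner_commute)

lemma lex_pos_normals_of_empty_inter:
  fixes A :: "('a::euclidean_space \<times> real) set"
  assumes "finite A" "\<forall>(a, b)\<in>A. a \<noteq> 0" "\<nexists>z. \<forall>(a, b)\<in>A. b \<le> a \<bullet> z"
  shows "\<exists>p\<in>A. lex_pos basis_list (fst p)" "\<exists>p\<in>A. \<not> lex_pos basis_list (fst p)"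
proof -
  show "\<exists>p\<in>A. lex_pos basis_list (fst p)"
  proof (rule ccontr)
    assume "\<not> ?thesis"
    then have "\<forall>(a, b)\<in>(\<lambda>(a, b). (- a, b)) ` A. lex_pos basis_list a"
      using assms(2) lex_pos_basis_list_uminus by fastforce
    then obtain z where "\<forall>(a, b)\<in>(\<lambda>(a, b). (- a, b)) ` A. b \<le> a \<bullet> z"
      using lex_pos_halfspaces_inter assms(1) by blast
    then have "\<forall>(a, b)\<in>A. b \<le> a \<bullet> - z" by auto
    then show False using assms(3) by blast
  qed
  show "\<exists>p\<in>A. \<not> lex_pos basis_list (fst p)"
    using lex_pos_halfspaces_inter[OF assms(1)] assms(3) by fastforce
qed

lemma slab_subset_slab_Un_outside_cball:
  fixes a u x :: "'a::real_inner"
  assumes "norm (u - a) * R < e - t"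
  shows "{z. \<bar>a \<bullet> (z - x)\<bar> \<le> t} \<subseteq> {z. \<bar>u \<bullet> (z - x)\<bar> < e} \<union> {z. R < dist x z}"
proof (intro subsetI)
  fix z assume z: "z \<in> {z. \<bar>a \<bullet> (z - x)\<bar> \<le> t}"
  show "z \<in> {z. \<bar>u \<bullet> (z - x)\<bar> < e} \<union> {z. R < dist x z}"
  proof (cases "dist x z \<le> R")
    case True
    have "\<bar>(u - a) \<bullet> (z - x)\<bar> \<le> norm (u - a) * norm (z - x)"
      by (rule Cauchy_Schwarz_ineq2)
    also have "\<dots> \<le> norm (u - a) * R"
      using True by (intro mult_left_mono) (auto simp: dist_norm norm_minus_commute)
    finally have "\<bar>(u - a) \<bullet> (z - x)\<bar> < e - t" using assms by linarith
    moreover have "u \<bullet> (z - x) = a \<bullet> (z - x) + (u - a) \<bullet> (z - x)"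
      by (simp add: inner_diff_left)
    ultimately show ?thesis using z by auto
  qed auto
qed

lemma (in finite_measure) measure_decseq_less:
  assumes "range A \<subseteq> sets M" "decseq A" "measure M (\<Inter>n. A n) < c"
  shows "\<exists>n. measure M (A n) < c"
  using order_tendstoD(2)[OF finite_Lim_measure_decseq[OF assms(1,2)] assms(3)]
  by (auto simp: eventually_sequentially)

locale hyperplane_null_prob_space =
  fixes M :: "'a::euclidean_space measure"
  assumes space_eq: "space M = UNIV"
    and borel_subset_sets: "sets borel \<subseteq> sets M"
    and emeasure_UNIV: "emeasure M UNIV = 1"
    and measure_hyperplane: "a \<noteq> 0 \<Longrightarrow> measure M {z. a \<bullet> z = b} = 0"
begin

sublocale finite_measure M
  by (rule finite_measureI) (simp add: space_eq emeasure_UNIV)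

lemma measure_UNIV: "measure M UNIV = 1"
  using emeasure_UNIV by (simp add: measure_def)

lemma open_in_sets: "open S \<Longrightarrow> S \<in> sets M"
  using borel_subset_sets borel_open by blast

lemma closed_in_sets: "closed S \<Longrightarrow> S \<in> sets M"
  using borel_subset_sets borel_closed by blast

lemma measure_sublevel_approx:
  fixes f :: "'a \<Rightarrow> real"
  assumes "continuous_on UNIV f" "measure M {z. f z \<le> 0} < c"
  shows "\<exists>n. measure M {z. f z < 1 / Suc n} < c"
proof (rule measure_decseq_less)
  have "f z \<le> 0" if "\<forall>n. f z < 1 / Suc n" for z
  proof (rule ccontr)
    assume "\<not> f z \<le> 0"
    then obtain n where "1 / Suc n < f z" using nat_approx_posE by (metis not_le)
    then show False using that by (metis less_asym)
  qed
  moreover have "f z < 1 / Suc n" if "f z \<le> 0" for z n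
    using that by (auto intro: le_less_trans)
  ultimately have "(\<Inter>n. {z. f z < 1 / Suc n}) = {z. f z \<le> 0}" by blast
  then show "measure M (\<Inter>n. {z. f z < 1 / Suc n}) < c" using assms(2) by simp
  show "decseq (\<lambda>n. {z. f z < 1 / Suc n})"
    unfolding decseq_def by (auto elim!: less_le_trans intro: frac_le)
  show "range (\<lambda>n. {z. f z < 1 / Suc n}) \<subseteq> sets M"
    by (intro image_subsetI open_in_sets open_Collect_less assms(1) continuous_on_const)
qed

lemma measure_superlevel_less:
  fixes g :: "'a \<Rightarrow> real"
  assumes "continuous_on UNIV g" "0 < c"
  shows "\<exists>N. measure M {z. real N < g z} < c"
proof (rule measure_decseq_less)
  have "(\<Inter>N. {z. real N < g z}) = {}"
  proof (intro equals0I)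
    fix z assume "z \<in> (\<Inter>N. {z. real N < g z})"
    moreover obtain N where "g z \<le> real N" using real_arch_simple by blast
    ultimately show False by (meson UNIV_I INT_E mem_Collect_eq not_le)
  qed
  then show "measure M (\<Inter>N. {z. real N < g z}) < c" using assms(2) by simp
  show "decseq (\<lambda>N. {z. real N < g z})"
    unfolding decseq_def by auto
  show "range (\<lambda>N. {z. real N < g z}) \<subseteq> sets M"
    by (intro image_subsetI open_in_sets open_Collect_less assms(1) continuous_on_const)
qed

lemma thin_slab_measure_less:
  assumes "u \<noteq> 0" "0 < c"
  shows "\<exists>e>0. measure M {z. \<bar>u \<bullet> (z - x)\<bar> < e} < c"
proof -
  have "{z. \<bar>u \<bullet> (z - x)\<bar> \<le> 0} = {z. u \<bullet> z = u \<bullet> x}"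
    by (auto simp: inner_diff_right)
  then have "measure M {z. \<bar>u \<bullet> (z - x)\<bar> \<le> 0} < c"
    using measure_hyperplane[OF assms(1)] assms(2) by simp
  moreover have "continuous_on UNIV (\<lambda>z. \<bar>u \<bullet> (z - x)\<bar>)"
    by (intro continuous_intros)
  ultimately obtain n where "measure M {z. \<bar>u \<bullet> (z - x)\<bar> < 1 / Suc n} < c"
    using measure_sublevel_approx by blast
  then show ?thesis by (intro exI[of _ "1 / Suc n"]) auto
qed

lemma measure_outside_cball_less:
  assumes "0 < c"
  shows "\<exists>R>0. measure M {z. R < dist x z} < c"
proof -
  have "continuous_on UNIV (dist x)" by (intro continuous_intros)
  then obtain N where N: "measure M {z. real N < dist x z} < c"
    using measure_superlevel_less assms by blast
  have "measure M {z. real N + 1 < dist x z} \<le> measure M {z. real N < dist x z}"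
    by (intro finite_measure_mono open_in_sets open_Collect_less continuous_intros) auto
  then have "measure M {z. real N + 1 < dist x z} < c" using N by linarith
  moreover have "0 < real N + 1" by simp
  ultimately show ?thesis by blast
qed

lemma uniform_thin_slab_measure_less:
  assumes "0 < c"
  shows "\<exists>t>0. \<forall>a. norm a = 1 \<longrightarrow> measure M {z. \<bar>a \<bullet> (z - x)\<bar> \<le> t} < c"
proof -
  obtain R where "0 < R" and outside: "measure M {z. R < dist x z} < c / 2"
    using measure_outside_cball_less assms half_gt_zero by blast
  have "\<forall>u. \<exists>e. norm u = 1 \<longrightarrow> 0 < e \<and> measure M {z. \<bar>u \<bullet> (z - x)\<bar> < e} < c / 2"
    using thin_slab_measure_less assms by (metis half_gt_zero norm_zero zero_neq_one)
  then obtain E where E: "\<And>u. norm u = 1 \<Longrightarrow> 0 < E u \<and> measure M {z. \<bar>u \<bullet> (z - x)\<bar> < E u} < c / 2"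
    by metis
  \<comment> \<open>Finitely many directions suffice: within \<open>cball x R\<close>, a thin slab in a direction close
    to \<open>u\<close> lies in the slab of width \<open>E u\<close> in direction \<open>u\<close>.\<close>
  obtain D where D: "D \<subseteq> sphere 0 1" "finite D" "sphere 0 1 \<subseteq> (\<Union>u\<in>D. ball u (E u / (2 * R)))"
  proof (rule compactE_image[of "sphere 0 1" "sphere 0 1" "\<lambda>u. ball u (E u / (2 * R))"])
    show "sphere 0 1 \<subseteq> (\<Union>u\<in>sphere 0 1. ball u (E u / (2 * R)))"
      using E \<open>0 < R\<close> by force
  qed auto
  have "D \<noteq> {}"
    using D(3) norm_Basis[OF SOME_Basis] by fastforce
  define t where "t = Min (E ` D) / 2"
  have "0 < t" using D E \<open>D \<noteq> {}\<close> by (auto simp: t_def)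
  moreover have "measure M {z. \<bar>a \<bullet> (z - x)\<bar> \<le> t} < c" if a: "norm a = 1" for a
  proof -
    obtain u where u: "u \<in> D" "dist u a < E u / (2 * R)" using D(3) a by force
    have "norm u = 1" using u(1) D(1) by auto
    have "t \<le> E u / 2" using D(2) u(1) by (auto simp: t_def)
    moreover have "norm (u - a) * R < E u / 2"
      using u(2) \<open>0 < R\<close> by (simp add: dist_norm pos_less_divide_eq algebra_simps)
    ultimately have "{z. \<bar>a \<bullet> (z - x)\<bar> \<le> t} \<subseteq> {z. \<bar>u \<bullet> (z - x)\<bar> < E u} \<union> {z. R < dist x z}"
      by (intro slab_subset_slab_Un_outside_cball) linarith
    then have "measure M {z. \<bar>a \<bullet> (z - x)\<bar> \<le> t}
        \<le> measure M {z. \<bar>u \<bullet> (z - x)\<bar> < E u} + measure M {z. R < dist x z}"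
      by (intro order.trans[OF finite_measure_mono measure_Un_le] sets.Un open_in_sets
          open_Collect_less continuous_intros)
    then show ?thesis using E[OF \<open>norm u = 1\<close>] outside by linarith
  qed
  ultimately show ?thesis by blast
qed

lemma measure_halfspace_near_point:
  assumes "0 < c"
  shows "\<exists>t>0. \<forall>y a b. dist x y < t \<longrightarrow> a \<noteq> 0 \<longrightarrow> a \<bullet> y \<le> b \<longrightarrow>
           measure M {z. a \<bullet> z \<le> a \<bullet> x} < measure M {z. a \<bullet> z \<le> b} + c"
proof -
  obtain t where "0 < t" and slab: "\<And>a. norm a = 1 \<Longrightarrow> measure M {z. \<bar>a \<bullet> (z - x)\<bar> \<le> t} < c"
    using uniform_thin_slab_measure_less[OF assms] by blast
  have "measure M {z. a \<bullet> z \<le> a \<bullet> x} < measure M {z. a \<bullet> z \<le> b} + c"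
    if "dist x y < t" "a \<noteq> 0" "a \<bullet> y \<le> b" for y a b
  proof -
    define n where "n = a /\<^sub>R norm a"
    have "{z. a \<bullet> z \<le> a \<bullet> x} \<subseteq> {z. a \<bullet> z \<le> b} \<union> {z. \<bar>n \<bullet> (z - x)\<bar> \<le> t}"
    proof (intro subsetI)
      fix z assume "z \<in> {z. a \<bullet> z \<le> a \<bullet> x}"
      moreover have "a \<bullet> (x - y) \<le> norm a * dist x y"
        by (metis Cauchy_Schwarz_ineq2 abs_le_D1 dist_norm)
      moreover have "norm a * dist x y \<le> norm a * t"
        using that(1) by (simp add: mult_left_mono)
      ultimately have "b < a \<bullet> z \<Longrightarrow> \<bar>a \<bullet> (z - x)\<bar> \<le> norm a * t"
        using that(3) by (auto simp: inner_diff_right)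
      moreover have "\<bar>n \<bullet> (z - x)\<bar> = \<bar>a \<bullet> (z - x)\<bar> / norm a"
        by (simp add: n_def abs_mult field_simps)
      ultimately show "z \<in> {z. a \<bullet> z \<le> b} \<union> {z. \<bar>n \<bullet> (z - x)\<bar> \<le> t}"
        using that(2) by (cases "b < a \<bullet> z") (auto simp: divide_le_eq mult.commute)
    qed
    then have "measure M {z. a \<bullet> z \<le> a \<bullet> x}
        \<le> measure M {z. a \<bullet> z \<le> b} + measure M {z. \<bar>n \<bullet> (z - x)\<bar> \<le> t}"
      by (intro order.trans[OF finite_measure_mono measure_Un_le] sets.Un closed_in_sets
          closed_Collect_le continuous_intros)
    moreover have "norm n = 1" using that(2) by (simp add: n_def)
    ultimately show ?thesis using slab by fastforce
  qed
  then show ?thesis using \<open>0 < t\<close> by blast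
qed

context
  fixes k :: nat
begin

definition eps :: real where
  "eps = 1 / real (k * DIM('a) + 1)"

definition weight :: "nat \<Rightarrow> 'a \<Rightarrow> nat" where
  "weight j a = (if lex_pos basis_list a then Suc j else k - j)"

definition big_halfspaces :: "nat \<Rightarrow> 'a set set" where
  "big_halfspaces j =
     {{z. b \<le> a \<bullet> z} | a b. a \<noteq> 0 \<and> measure M {z. a \<bullet> z < b} < weight j a * eps}"

lemma eps_pos: "0 < eps"
  by (simp add: eps_def add_pos_nonneg)

lemma weight_bounds: "j < k \<Longrightarrow> 1 \<le> weight j a \<and> weight j a \<le> k"
  by (auto simp: weight_def)

lemma sum_weight_le:
  fixes f :: "'b \<Rightarrow> 'a"
  assumes "j < k" "finite S" "card S \<le> DIM('a) + 1"
    and "s\<^sub>1 \<in> S" "lex_pos basis_list (f s\<^sub>1)" "s\<^sub>2 \<in> S" "\<not> lex_pos basis_list (f s\<^sub>2)"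
  shows "(\<Sum>s\<in>S. weight j (f s)) \<le> k * DIM('a) + 1"
proof -
  have "s\<^sub>1 \<noteq> s\<^sub>2" using assms(5,7) by auto
  have "(\<Sum>s\<in>S. weight j (f s)) = weight j (f s\<^sub>1) + (\<Sum>s\<in>S - {s\<^sub>1}. weight j (f s))"
    using assms(2,4) by (rule sum.remove)
  also have "(\<Sum>s\<in>S - {s\<^sub>1}. weight j (f s))
      = weight j (f s\<^sub>2) + (\<Sum>s\<in>S - {s\<^sub>1} - {s\<^sub>2}. weight j (f s))"
    using assms(2,6) \<open>s\<^sub>1 \<noteq> s\<^sub>2\<close> by (intro sum.remove) auto
  also have "weight j (f s\<^sub>1) + (weight j (f s\<^sub>2) + (\<Sum>s\<in>S - {s\<^sub>1} - {s\<^sub>2}. weight j (f s)))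
      \<le> Suc j + (k - j) + card (S - {s\<^sub>1} - {s\<^sub>2}) * k"
    using assms(1,5,7) weight_bounds sum_bounded_above[of "S - {s\<^sub>1} - {s\<^sub>2}" "\<lambda>s. weight j (f s)" k]
    by (simp add: weight_def)
  also have "card (S - {s\<^sub>1} - {s\<^sub>2}) = card S - 2"
    using assms(2,4,6) \<open>s\<^sub>1 \<noteq> s\<^sub>2\<close> by (simp add: card_Diff_subset)
  also have "Suc j + (k - j) + (card S - 2) * k \<le> k * DIM('a) + 1"
  proof -
    have "(card S - 2 + 1) * k \<le> DIM('a) * k"
      using assms(3) DIM_positive[where 'a='a] by (intro mult_right_mono) linarith+
    then show ?thesis using assms(1) by (simp add: algebra_simps)
  qed
  finally show ?thesis .
qed

lemma big_halfspace_constraints_common_point: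
  assumes "j < k" "finite A" "card A \<le> DIM('a) + 1"
    and big: "\<forall>(a, b)\<in>A. a \<noteq> 0 \<and> measure M {z. a \<bullet> z < b} < weight j a * eps"
  shows "\<exists>z. \<forall>(a, b)\<in>A. b \<le> a \<bullet> z"
proof (rule ccontr)
  assume none: "\<nexists>z. \<forall>(a, b)\<in>A. b \<le> a \<bullet> z"
  obtain p\<^sub>1 p\<^sub>2 where p\<^sub>1: "p\<^sub>1 \<in> A" "lex_pos basis_list (fst p\<^sub>1)"
    and p\<^sub>2: "p\<^sub>2 \<in> A" "\<not> lex_pos basis_list (fst p\<^sub>2)"
    using lex_pos_normals_of_empty_inter[OF assms(2) _ none] big by blast
  have "z \<in> (\<Union>(a, b)\<in>A. {z. a \<bullet> z < b})" for z
  proof -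
    obtain a b where "(a, b) \<in> A" "a \<bullet> z < b" using none by (force simp: not_le)
    then show ?thesis by force
  qed
  then have cover: "(\<Union>(a, b)\<in>A. {z. a \<bullet> z < b}) = UNIV" by blast
  have sets: "(\<lambda>(a, b). {z. a \<bullet> z < b}) ` A \<subseteq> sets M"
    by (auto intro!: open_in_sets open_halfspace_lt)
  have "1 \<le> (\<Sum>(a, b)\<in>A. measure M {z. a \<bullet> z < b})"
    using finite_measure_subadditive_finite[OF assms(2) sets] unfolding cover measure_UNIV
    by (simp add: prod.case_distrib)
  also have "\<dots> < (\<Sum>(a, b)\<in>A. weight j a * eps)"
    using big p\<^sub>1(1) assms(2) by (intro sum_strict_mono) auto
  also have "\<dots> = real (\<Sum>p\<in>A. weight j (fst p)) * eps"
    by (simp add: sum_distrib_right split_beta)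
  also have "\<dots> \<le> real (k * DIM('a) + 1) * eps"
    using sum_weight_le[OF assms(1-3) p\<^sub>1 p\<^sub>2] eps_pos
    by (intro mult_right_mono) (simp_all only: of_nat_le_iff less_imp_le)
  also have "\<dots> = 1"
    by (simp add: eps_def del: of_nat_add of_nat_mult)
  finally show False by simp
qed

lemma big_halfspaces_inter_small:
  assumes "j < k" "T \<subseteq> big_halfspaces j" "finite T" "card T \<le> DIM('a) + 1"
  shows "\<Inter>T \<noteq> {}"
proof -
  let ?P = "{(a, b). a \<noteq> 0 \<and> measure M {z. a \<bullet> z < b} < weight j a * eps}"
  have "big_halfspaces j = (\<lambda>(a, b). {z. b \<le> a \<bullet> z}) ` ?P"
    unfolding big_halfspaces_def by auto
  then have "\<exists>A\<subseteq>?P. inj_on (\<lambda>(a, b). {z. b \<le> a \<bullet> z}) A \<and> T = (\<lambda>(a, b). {z. b \<le> a \<bullet> z}) ` A"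
    using assms(2) by (intro subset_image_inj[THEN iffD1]) simp
  then obtain A where A: "A \<subseteq> ?P" "inj_on (\<lambda>(a, b). {z. b \<le> a \<bullet> z}) A"
      "T = (\<lambda>(a, b). {z. b \<le> a \<bullet> z}) ` A"
    by blast
  then have "finite A" "card A = card T"
    using assms(3) by (auto simp: finite_image_iff card_image)
  then obtain z where "\<forall>(a, b)\<in>A. b \<le> a \<bullet> z"
    using big_halfspace_constraints_common_point[OF assms(1)] A(1) assms(4) by fastforce
  then have "z \<in> \<Inter>T" using A(3) by auto
  then show ?thesis by blast
qed

lemma big_halfspaces_inter_finite:
  assumes "j < k" "T \<subseteq> big_halfspaces j" "finite T"
  shows "\<Inter>T \<noteq> {}"
proof (cases "card T \<le> DIM('a) + 1")
  case True
  then show ?thesis using big_halfspaces_inter_small assms by blast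
next
  case False
  show ?thesis
  proof (rule Helly)
    show "DIM('a) + 1 \<le> card T" using False by simp
    show "\<forall>S\<in>T. convex S"
      using assms(2) by (auto simp: big_halfspaces_def convex_halfspace_ge)
    show "\<Inter>T' \<noteq> {}" if "T' \<subseteq> T" "card T' = DIM('a) + 1" for T'
      using that assms(2,3)
      by (intro big_halfspaces_inter_small[OF assms(1)]) (auto intro: finite_subset)
  qed
qed

lemma far_halfspace_in_big_halfspaces:
  assumes "j < k" "norm v = 1" "measure M {z. r < norm z} < eps"
  shows "{z. - r \<le> v \<bullet> z} \<in> big_halfspaces j"
proof -
  have "{z. v \<bullet> z < - r} \<subseteq> {z. r < norm z}"
  proof (intro subsetI CollectI)
    fix z assume "z \<in> {z. v \<bullet> z < - r}"
    moreover have "\<bar>v \<bullet> z\<bar> \<le> norm z"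
      using Cauchy_Schwarz_ineq2[of v z] assms(2) by simp
    ultimately show "r < norm z" by auto
  qed
  then have "measure M {z. v \<bullet> z < - r} \<le> measure M {z. r < norm z}"
    by (intro finite_measure_mono open_in_sets open_Collect_less continuous_intros)
  also have "\<dots> < eps" by (rule assms(3))
  also have "\<dots> \<le> weight j v * eps"
    using weight_bounds[OF assms(1)] eps_pos by simp
  finally have "measure M {z. v \<bullet> z < - r} < weight j v * eps" .
  moreover have "v \<noteq> 0" using assms(2) by auto
  ultimately show ?thesis unfolding big_halfspaces_def by blast
qed

lemma big_halfspaces_inter:
  assumes "j < k"
  shows "\<Inter>(big_halfspaces j) \<noteq> {}"
proof -
  obtain N where N: "measure M {z. real N < norm z} < eps"
    using measure_superlevel_less[of norm] eps_pos by (auto intro: continuous_intros)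
  define B :: "'a set set" where "B = (\<lambda>v. {z. - real N \<le> v \<bullet> z}) ` (Basis \<union> uminus ` Basis)"
  have "B \<subseteq> big_halfspaces j"
    unfolding B_def
  proof (rule image_subsetI)
    fix v :: 'a assume "v \<in> Basis \<union> uminus ` Basis"
    then have "norm v = 1" by auto
    then show "{z. - real N \<le> v \<bullet> z} \<in> big_halfspaces j"
      by (rule far_halfspace_in_big_halfspaces[OF assms _ N])
  qed
  have "\<Inter>B \<subseteq> cbox (- real N *\<^sub>R One) (real N *\<^sub>R One)"
  proof
    fix z assume z: "z \<in> \<Inter>B"
    have "- real N \<le> i \<bullet> z \<and> - real N \<le> (- i) \<bullet> z" if "i \<in> Basis" for i
    proof -
      have "i \<in> Basis \<union> uminus ` Basis" "- i \<in> Basis \<union> uminus ` Basis" using that by auto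
      then show ?thesis using z unfolding B_def by blast
    qed
    then have "- real N \<le> z \<bullet> i \<and> z \<bullet> i \<le> real N" if "i \<in> Basis" for i
      using that by (auto simp: inner_commute)
    then show "z \<in> cbox (- real N *\<^sub>R One) (real N *\<^sub>R One)"
      by (simp add: mem_box)
  qed
  moreover have "closed (\<Inter>B)"
    unfolding B_def by (intro closed_Inter) (auto simp: closed_halfspace_ge)
  ultimately have "compact (\<Inter>B)"
    by (simp add: compact_eq_bounded_closed bounded_subset[OF bounded_cbox])
  then have "\<Inter>B \<inter> \<Inter>(big_halfspaces j) \<noteq> {}"
  proof (rule compact_imp_fip)
    show "closed S" if "S \<in> big_halfspaces j" for S
      using that by (auto simp: big_halfspaces_def closed_halfspace_ge)
    show "\<Inter>B \<inter> \<Inter>F \<noteq> {}" if "finite F" "F \<subseteq> big_halfspaces j" for F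
      using big_halfspaces_inter_finite[OF assms, of "B \<union> F"] that \<open>B \<subseteq> big_halfspaces j\<close>
      by (simp add: Inter_Un_distrib B_def)
  qed
  then show ?thesis by blast
qed

lemma weight_le_measure_of_point:
  assumes "p \<in> \<Inter>(big_halfspaces j)" "a \<noteq> 0" "a \<bullet> p \<le> b"
  shows "weight j a * eps \<le> measure M {z. a \<bullet> z \<le> b}"
proof (rule ccontr)
  assume "\<not> ?thesis"
  then have small: "measure M {z. a \<bullet> z - b \<le> 0} < weight j a * eps" by simp
  have "continuous_on UNIV (\<lambda>z. a \<bullet> z - b)" by (intro continuous_intros)
  then obtain n where "measure M {z. a \<bullet> z - b < 1 / Suc n} < weight j a * eps"
    using measure_sublevel_approx small by blast
  then have "{z. b + 1 / Suc n \<le> a \<bullet> z} \<in> big_halfspaces j"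
    using assms(2) unfolding big_halfspaces_def by (force simp: algebra_simps)
  then have "b + 1 / Suc n \<le> a \<bullet> p" using assms(1) by blast
  moreover have "0 < 1 / real (Suc n)" by simp
  ultimately show False using assms(3) by linarith
qed

definition deep_points :: "(nat \<Rightarrow> 'a) \<Rightarrow> bool" where
  "deep_points p \<longleftrightarrow>
     (\<forall>a b. a \<noteq> 0 \<longrightarrow> card {l. l < k \<and> a \<bullet> p l \<le> b} * eps \<le> measure M {z. a \<bullet> z \<le> b})"

lemma exists_weight_ge_card:
  assumes "J \<subseteq> {..<k}" "J \<noteq> {}"
  shows "\<exists>m\<in>J. card J \<le> weight m a"
proof -
  have "finite J" using assms(1) finite_subset by blast
  show ?thesis
  proof (cases "lex_pos basis_list a")
    case True
    have "J \<subseteq> {..Max J}" using \<open>finite J\<close> by auto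
    then have "card J \<le> Suc (Max J)" using card_mono[of "{..Max J}" J] by simp
    then show ?thesis using Max_in[OF \<open>finite J\<close> assms(2)] True by (auto simp: weight_def)
  next
    case False
    have "J \<subseteq> {Min J..<k}" using \<open>finite J\<close> assms(1) by auto
    then have "card J \<le> k - Min J" using card_mono[of "{Min J..<k}" J] by simp
    then show ?thesis using Min_in[OF \<open>finite J\<close> assms(2)] False by (auto simp: weight_def)
  qed
qed

lemma exists_deep_points: "\<exists>p. deep_points p"
proof -
  have "\<forall>j. \<exists>x. j < k \<longrightarrow> x \<in> \<Inter>(big_halfspaces j)"
    using big_halfspaces_inter by blast
  then obtain p where p: "\<And>j. j < k \<Longrightarrow> p j \<in> \<Inter>(big_halfspaces j)"
    by metis
  have "card J * eps \<le> measure M {z. a \<bullet> z \<le> b}"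
    if "a \<noteq> 0" and J: "J = {l. l < k \<and> a \<bullet> p l \<le> b}" for a b J
  proof (cases "J = {}")
    case False
    then obtain m where m: "m \<in> J" "card J \<le> weight m a"
      using exists_weight_ge_card[of J] J by blast
    then have "card J * eps \<le> weight m a * eps" using eps_pos by simp
    also have "\<dots> \<le> measure M {z. a \<bullet> z \<le> b}"
      using m(1) J that(1) p by (intro weight_le_measure_of_point) auto
    finally show ?thesis .
  qed simp
  then have "deep_points p" by (simp add: deep_points_def)
  then show ?thesis by blast
qed

lemma deep_points_fun_upd_halfspace:
  assumes deep: "deep_points p" and ij: "i < k" "j < k" "i \<noteq> j" "p i = p j" and "a \<noteq> 0"
    and near: "a \<bullet> y \<le> b \<Longrightarrow> b < a \<bullet> p j \<Longrightarrow>
      measure M {z. a \<bullet> z \<le> a \<bullet> p j} < measure M {z. a \<bullet> z \<le> b} + eps"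
  shows "card {l. l < k \<and> a \<bullet> (p(j := y)) l \<le> b} * eps \<le> measure M {z. a \<bullet> z \<le> b}"
proof -
  let ?J = "\<lambda>c. {l. l < k \<and> a \<bullet> p l \<le> c}"
  let ?Jy = "{l. l < k \<and> a \<bullet> (p(j := y)) l \<le> b}"
  have deep_ab: "card (?J c) * eps \<le> measure M {z. a \<bullet> z \<le> c}" for c
    using deep \<open>a \<noteq> 0\<close> by (simp add: deep_points_def)
  show ?thesis
  proof (cases "a \<bullet> y \<le> b \<and> b < a \<bullet> p j")
    case False
    then have "?Jy \<subseteq> ?J b" by auto
    then have "card ?Jy \<le> card (?J b)" by (intro card_mono) simp_all
    then have "card ?Jy * eps \<le> card (?J b) * eps"
      using eps_pos by (intro mult_right_mono) simp_all
    then show ?thesis using deep_ab[of b] by linarith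
  next
    case True
    \<comment> \<open>Only \<open>p j\<close> entered the halfspace, while \<open>p i = p j\<close> stays outside; the parallel
      halfspace through \<open>p j\<close> contains both and has almost the same mass.\<close>
    have "card ?Jy \<le> card (insert j (?J b))" by (intro card_mono) auto
    also have "\<dots> \<le> Suc (card (?J b))" by (simp add: card_insert_if)
    finally have "card ?Jy \<le> Suc (card (?J b))" .
    moreover have "insert i (insert j (?J b)) \<subseteq> ?J (a \<bullet> p j)" "i \<notin> ?J b" "j \<notin> ?J b"
      using True ij by auto
    then have "Suc (Suc (card (?J b))) \<le> card (?J (a \<bullet> p j))"
      using ij(3) card_mono[of "?J (a \<bullet> p j)" "insert i (insert j (?J b))"] by simp
    ultimately have "Suc (card ?Jy) \<le> card (?J (a \<bullet> p j))" by linarith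
    then have "real (Suc (card ?Jy)) * eps \<le> card (?J (a \<bullet> p j)) * eps"
      using eps_pos by (intro mult_right_mono) (simp_all only: of_nat_le_iff less_imp_le)
    then have "card ?Jy * eps + eps \<le> card (?J (a \<bullet> p j)) * eps"
      by (simp add: algebra_simps)
    also have "\<dots> \<le> measure M {z. a \<bullet> z \<le> a \<bullet> p j}" by (rule deep_ab)
    also have "\<dots> < measure M {z. a \<bullet> z \<le> b} + eps"
      using True by (intro near) auto
    finally show ?thesis by simp
  qed
qed

lemma deep_points_separate:
  assumes "deep_points p" "i < k" "j < k" "i \<noteq> j" "p i = p j"
  shows "\<exists>y. y \<notin> p ` {..<k} \<and> deep_points (p(j := y))"
proof -
  obtain t where "0 < t" and near: "\<And>y a b. dist (p j) y < t \<Longrightarrow> a \<noteq> 0 \<Longrightarrow> a \<bullet> y \<le> b \<Longrightarrow>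
      measure M {z. a \<bullet> z \<le> a \<bullet> p j} < measure M {z. a \<bullet> z \<le> b} + eps"
    using measure_halfspace_near_point[OF eps_pos] by blast
  have "infinite (ball (p j) t)"
    using islimpt_UNIV[of "p j"] \<open>0 < t\<close> by (simp add: islimpt_eq_infinite_ball)
  then have "infinite (ball (p j) t - p ` {..<k})"
    by (intro Diff_infinite_finite) simp_all
  then obtain y where y: "y \<in> ball (p j) t" "y \<notin> p ` {..<k}"
    using infinite_imp_nonempty by blast
  have "deep_points (p(j := y))"
    unfolding deep_points_def
    using deep_points_fun_upd_halfspace[OF assms] near y(1) by (simp add: dist_commute)
  then show ?thesis using y(2) by blast
qed

lemma exists_deep_points_inj: "\<exists>p. deep_points p \<and> inj_on p {..<k}"
proof -
  have "\<exists>p. deep_points p \<and> min n k \<le> card (p ` {..<k})" for n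
  proof (induction n)
    case 0
    then show ?case using exists_deep_points by simp
  next
    case (Suc n)
    then obtain p where p: "deep_points p" "min n k \<le> card (p ` {..<k})" by blast
    show ?case
    proof (cases "min (Suc n) k \<le> card (p ` {..<k})")
      case False
      then have "card (p ` {..<k}) < card {..<k}" using p(2) by simp
      then obtain i j where ij: "i < k" "j < k" "i \<noteq> j" "p i = p j"
        by (metis card_image inj_onI lessThan_iff less_irrefl)
      then obtain y where y: "y \<notin> p ` {..<k}" "deep_points (p(j := y))"
        using deep_points_separate[OF p(1)] by blast
      have "p j \<in> p ` ({..<k} - {j})" using ij by (metis DiffI image_eqI lessThan_iff singletonD)
      then have "p ` ({..<k} - {j}) = p ` {..<k}"
        using ij(2) by (metis image_insert insert_Diff insert_absorb lessThan_iff)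
      then have "p(j := y) ` {..<k} = insert y (p ` {..<k})"
        using ij(2) by (simp only: fun_upd_image lessThan_iff if_True)
      then have "card (p(j := y) ` {..<k}) = Suc (card (p ` {..<k}))"
        using y(1) by simp
      then have "min (Suc n) k \<le> card (p(j := y) ` {..<k})" using p(2) by linarith
      then show ?thesis using y(2) by blast
    qed (use p in blast)
  qed
  then obtain p where "deep_points p" "k \<le> card (p ` {..<k})" by (metis min.idem)
  moreover have "card (p ` {..<k}) \<le> card {..<k}" by (rule card_image_le) simp
  ultimately show ?thesis by (auto simp: inj_on_iff_eq_card)
qed

lemma eps_le_gtd_deep_points:
  assumes "1 \<le> k" "deep_points p" "inj_on p {..<k}"
  shows "eps \<le> gtd M (p ` {..<k})"
  unfolding gtd_def
proof (rule cINF_greatest)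
  obtain u :: 'a where "u \<in> Basis" using nonempty_Basis by blast
  then have "{z. u \<bullet> z \<le> u \<bullet> p 0} \<in> closed_halfspaces"
    unfolding closed_halfspaces_def by auto
  moreover have "p 0 \<in> {z. u \<bullet> z \<le> u \<bullet> p 0} \<inter> p ` {..<k}" using assms(1) by auto
  ultimately show "{h \<in> closed_halfspaces. h \<inter> p ` {..<k} \<noteq> {}} \<noteq> {}" by blast
next
  fix h assume h: "h \<in> {h \<in> closed_halfspaces. h \<inter> p ` {..<k} \<noteq> {}}"
  then obtain a b where ab: "h = {z. a \<bullet> z \<le> b}" "a \<noteq> 0"
    by (auto simp: closed_halfspaces_def)
  have "h \<inter> p ` {..<k} = p ` {l. l < k \<and> a \<bullet> p l \<le> b}" by (auto simp: ab(1))
  then have "card (h \<inter> p ` {..<k}) = card {l. l < k \<and> a \<bullet> p l \<le> b}"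
    using assms(3) by (auto intro!: card_image elim: inj_on_subset)
  moreover have "0 < card (h \<inter> p ` {..<k})" using h by (auto simp: card_gt_0_iff)
  moreover have "card {l. l < k \<and> a \<bullet> p l \<le> b} * eps \<le> measure M h"
    using assms(2) ab by (simp add: deep_points_def)
  ultimately show "eps \<le> measure M h / card (h \<inter> p ` {..<k})"
    by (simp add: pos_le_divide_eq mult.commute)
qed

end

end

lemma hyperplane_null_prob_space_mass_distribution:
  assumes "mass_distribution M" "emeasure M UNIV = 1"
  shows "hyperplane_null_prob_space M"
proof
  have null: "\<forall>S\<in>sets M. aff_dim S < int DIM('a) \<longrightarrow> emeasure M S = 0"
    using assms(1) by (simp add: mass_distribution_def)
  show "space M = UNIV" "sets borel \<subseteq> sets M"
    using assms(1) by (simp_all add: mass_distribution_def)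
  show "emeasure M UNIV = 1" by (rule assms(2))
  show "measure M {z. a \<bullet> z = b} = 0" if "a \<noteq> 0" for a :: 'a and b
  proof -
    have "{z. a \<bullet> z = b} \<in> sets M"
      using \<open>sets borel \<subseteq> sets M\<close> borel_closed[OF closed_hyperplane] by blast
    then have "emeasure M {z. a \<bullet> z = b} = 0" using null that by simp
    then show ?thesis by (simp add: measure_def)
  qed
qed

theorem corollary1:
  fixes M :: "'a::euclidean_space measure" and k :: nat
  assumes "k \<ge> 1"
    and "mass_distribution M"
    and "emeasure M UNIV = 1"
  shows "\<exists>Q :: 'a set. finite Q \<and> card Q = k \<and> gtd M Q \<ge> 1 / real (k * DIM('a) + 1)"
proof -
  interpret hyperplane_null_prob_space M
    using hyperplane_null_prob_space_mass_distribution assms(2,3) .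
  obtain p where p: "deep_points k p" "inj_on p {..<k}"
    using exists_deep_points_inj by blast
  then have "eps k \<le> gtd M (p ` {..<k})"
    using eps_le_gtd_deep_points assms(1) by blast
  moreover have "finite (p ` {..<k})" "card (p ` {..<k}) = k"
    using p(2) by (simp_all add: card_image)
  ultimately show ?thesis unfolding eps_def by blast
qed

end
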